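(* Let $\alpha\ge4$ and $B>1$. Let $\mathcal{F}=A_n\circ\cdots\circ A_0$ be a deep learning model in which every block $A_i$ is either a basic block or a residual block, with approximate model $\mathcal{F}^\alpha=A_n^\alpha\circ\cdots\circ A_0^\alpha$. Here a basic block is one of: a linear block $A(\mathbf{x})=\mathbf{A}\mathbf{x}+\mathbf{b}$ (approximation $A^\alpha=A$); a ReLU block (coordinatewise $\max(x,0)$, approximated by applying $\tilde r_{\alpha,B}$ coordinatewise); a max-pooling block with kernel size $k_0\le10$ (each output coordinate the max of a window of $k_0^2$ inputs, approximated by applying $\tilde M_{\alpha,k_0^2,B}$ to each window); or a softmax block $A(\mathbf{x})=(\exp(x_i)/\sum_j\exp(x_j))_i$ (approximation $A^\alpha=A$). A residual block is $R(\mathbf{x})=\mathcal{G}(\mathbf{x})+\mathbf{P}\mathbf{x}$, where $\mathcal{G}$ is a composition of basic blocks and $\mathbf{P}$ is a matrix, with approximation $R^\alpha(\mathbf{x})=\mathcal{G}^\alpha(\mathbf{x})+\mathbf{P}\mathbf{x}$, $\mathcal{G}^\alpha$ being the composition of the approximations of the basic blocks of $\mathcal{G}$. Assume that all inputs to all blocks (including the blocks inside residual blocks), in both the original and the approximate model, have infinity norm at most $B$ for every input $\mathbf{x}$ considered. Then there exists a constant $C$, determined only by the model parameters (and independent of $\alpha$), such that $\|\mathcal{F}^\alpha(\mathbf{x})-\mathcal{F}(\mathbf{x})\|_\infty\le C2^{-\alpha}$ for every such input $\mathbf{x}$.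
   Context: Let $p_\alpha$ be a polynomial such that $m_\alpha(a,b)=\frac{(a+b)+(a-b)p_\alpha(a-b)}{2}$ satisfies $|m_\alpha(a,b)-\max(a,b)|\le2^{-\alpha}$ for all $a,b\in[0,1]$. Define $r_\alpha(x)=\frac{x+xp_\alpha(x)}{2}$ and $\tilde r_{\alpha,B}(x)=B\,r_\alpha(x/B)$. Define $M_{\alpha,1}(x_1)=x_1$, $M_{\alpha,2k}(x_1,\dots,x_{2k})=m_\alpha(M_{\alpha,k}(x_1,\dots,x_k),M_{\alpha,k}(x_{k+1},\dots,x_{2k}))$, $M_{\alpha,2k+1}(x_1,\dots,x_{2k+1})=m_\alpha(M_{\alpha,k}(x_1,\dots,x_k),M_{\alpha,k+1}(x_{k+1},\dots,x_{2k+1}))$, and $\tilde M_{\alpha,n,B}(x_1,\dots,x_n)=B'\big(M_{\alpha,n}(\tfrac{x_1}{B'}+0.5,\dots,\tfrac{x_n}{B'}+0.5)-0.5\big)$ with $B'=B/(0.5-(\lceil\log_2 n\rceil-1)2^{-\alpha})$. *)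

theory Defs
  imports "HOL-Computational_Algebra.Polynomial"
begin

type_synonym vec = "real list"

definition ninf :: "vec \<Rightarrow> real" where
  "ninf v = foldr (\<lambda>t m. max \<bar>t\<bar> m) v 0"

definition vadd :: "vec \<Rightarrow> vec \<Rightarrow> vec" where
  "vadd u v = map2 (+) u v"

definition vsub :: "vec \<Rightarrow> vec \<Rightarrow> vec" where
  "vsub u v = map2 (-) u v"

(* matrix given as list of rows *)
definition matvec :: "real list list \<Rightarrow> vec \<Rightarrow> vec" where
  "matvec A x = map (\<lambda>r. sum_list (map2 (*) r x)) A"

section \<open>Polynomial approximations of max and ReLU (q plays the role of p_alpha)\<close>

definition malpha :: "real poly \<Rightarrow> real \<Rightarrow> real \<Rightarrow> real" where
  "malpha q a b = ((a + b) + (a - b) * poly q (a - b)) / 2"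

definition ralpha :: "real poly \<Rightarrow> real \<Rightarrow> real" where
  "ralpha q x = (x + x * poly q x) / 2"

definition rtilde :: "real poly \<Rightarrow> real \<Rightarrow> real \<Rightarrow> real" where
  "rtilde q B x = B * ralpha q (x / B)"

function Mtree :: "real poly \<Rightarrow> real list \<Rightarrow> real" where
  "Mtree q xs = (if length xs = 0 then 0 else if length xs = 1 then hd xs
     else malpha q (Mtree q (take (length xs div 2) xs)) (Mtree q (drop (length xs div 2) xs)))"
  by pat_completeness auto
termination
proof (relation "measure (\<lambda>(q, xs). length xs)")
  fix q :: "real poly" and xs :: "real list"
  assume h: "\<not> length xs = 0" "\<not> length xs = 1"
  hence "length xs \<ge> 2" by linarith
  hence "length xs div 2 > 0" "length xs div 2 < length xs" by auto
  thus "((q, take (length xs div 2) xs), q, xs) \<in> measure (\<lambda>(q, xs). length xs)"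
    "((q, drop (length xs div 2) xs), q, xs) \<in> measure (\<lambda>(q, xs). length xs)" by auto
qed auto

declare Mtree.simps[simp del]

definition Bprime :: "nat \<Rightarrow> nat \<Rightarrow> real \<Rightarrow> real" where
  "Bprime \<alpha> n B = B / (1/2 - real_of_int (\<lceil>log 2 (real n)\<rceil> - 1) * 2 powr (- real \<alpha>))"

definition Mtilde :: "real poly \<Rightarrow> nat \<Rightarrow> real \<Rightarrow> real list \<Rightarrow> real" where
  "Mtilde q \<alpha> B xs =
     (let B' = Bprime \<alpha> (length xs) B
      in B' * (Mtree q (map (\<lambda>x. x / B' + 1/2) xs) - 1/2))"

(* MaxPool k0 W: each window w in W is a list of k0^2 input indices;
   the output has one coordinate per window. *)
datatype basic_block =
    Linear "real list list" "real list"
  | ReLU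
  | MaxPool nat "nat list list"
  | Softmax

(* Residual G P: R(x) = G(x) + P x, G = composition of basic blocks, applied in list order *)
datatype block = Basic basic_block | Residual "basic_block list" "real list list"

fun eval_basic :: "basic_block \<Rightarrow> vec \<Rightarrow> vec" where
  "eval_basic (Linear A b) x = vadd (matvec A x) b"
| "eval_basic ReLU x = map (\<lambda>t. max t 0) x"
| "eval_basic (MaxPool k0 W) x = map (\<lambda>w. Max (set (map (\<lambda>i. x ! i) w))) W"
| "eval_basic Softmax x = map (\<lambda>t. exp t / sum_list (map exp x)) x"

fun approx_basic :: "real poly \<Rightarrow> nat \<Rightarrow> real \<Rightarrow> basic_block \<Rightarrow> vec \<Rightarrow> vec" where
  "approx_basic q \<alpha> B (Linear A b) x = vadd (matvec A x) b"
| "approx_basic q \<alpha> B ReLU x = map (rtilde q B) x"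
| "approx_basic q \<alpha> B (MaxPool k0 W) x = map (\<lambda>w. Mtilde q \<alpha> B (map (\<lambda>i. x ! i) w)) W"
| "approx_basic q \<alpha> B Softmax x = map (\<lambda>t. exp t / sum_list (map exp x)) x"

definition comp_basic :: "(basic_block \<Rightarrow> vec \<Rightarrow> vec) \<Rightarrow> basic_block list \<Rightarrow> vec \<Rightarrow> vec" where
  "comp_basic ev G x = foldl (\<lambda>v b. ev b v) x G"

fun eval_block :: "(basic_block \<Rightarrow> vec \<Rightarrow> vec) \<Rightarrow> block \<Rightarrow> vec \<Rightarrow> vec" where
  "eval_block ev (Basic b) x = ev b x"
| "eval_block ev (Residual G P) x = vadd (comp_basic ev G x) (matvec P x)"

(* model [A_0, ..., A_n] computes A_n o ... o A_0 *)
definition eval_model :: "(basic_block \<Rightarrow> vec \<Rightarrow> vec) \<Rightarrow> block list \<Rightarrow> vec \<Rightarrow> vec" where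
  "eval_model ev F x = foldl (\<lambda>v blk. eval_block ev blk v) x F"

fun bdim :: "basic_block \<Rightarrow> nat \<Rightarrow> nat option" where
  "bdim (Linear A b) d =
     (if length b = length A \<and> (\<forall>r\<in>set A. length r = d) then Some (length A) else None)"
| "bdim ReLU d = Some d"
| "bdim (MaxPool k0 W) d =
     (if 1 \<le> k0 \<and> k0 \<le> 10 \<and> (\<forall>w\<in>set W. length w = k0\<^sup>2 \<and> (\<forall>i\<in>set w. i < d))
      then Some (length W) else None)"
| "bdim Softmax d = Some d"

fun chain_dim :: "basic_block list \<Rightarrow> nat \<Rightarrow> nat option" where
  "chain_dim [] d = Some d"
| "chain_dim (b # G) d = (case bdim b d of None \<Rightarrow> None | Some d' \<Rightarrow> chain_dim G d')"

fun block_dim :: "block \<Rightarrow> nat \<Rightarrow> nat option" where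
  "block_dim (Basic b) d = bdim b d"
| "block_dim (Residual G P) d =
     (case chain_dim G d of None \<Rightarrow> None
      | Some d' \<Rightarrow> if length P = d' \<and> (\<forall>r\<in>set P. length r = d) then Some d' else None)"

fun model_dim :: "block list \<Rightarrow> nat \<Rightarrow> nat option" where
  "model_dim [] d = Some d"
| "model_dim (blk # F) d = (case block_dim blk d of None \<Rightarrow> None | Some d' \<Rightarrow> model_dim F d')"

definition wf_model :: "nat \<Rightarrow> block list \<Rightarrow> bool" where
  "wf_model d F \<longleftrightarrow> model_dim F d \<noteq> None"

definition bounded_chain :: "(basic_block \<Rightarrow> vec \<Rightarrow> vec) \<Rightarrow> real \<Rightarrow> basic_block list \<Rightarrow> vec \<Rightarrow> bool" where
  "bounded_chain ev B G x \<longleftrightarrow> (\<forall>j<length G. ninf (comp_basic ev (take j G) x) \<le> B)"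

fun bounded_block :: "(basic_block \<Rightarrow> vec \<Rightarrow> vec) \<Rightarrow> real \<Rightarrow> block \<Rightarrow> vec \<Rightarrow> bool" where
  "bounded_block ev B (Basic b) x \<longleftrightarrow> ninf x \<le> B"
| "bounded_block ev B (Residual G P) x \<longleftrightarrow> ninf x \<le> B \<and> bounded_chain ev B G x"

definition bounded_model :: "(basic_block \<Rightarrow> vec \<Rightarrow> vec) \<Rightarrow> real \<Rightarrow> block list \<Rightarrow> vec \<Rightarrow> bool" where
  "bounded_model ev B F x \<longleftrightarrow>
     (\<forall>j<length F. bounded_block ev B (F ! j) (eval_model ev (take j F) x))"

end

theory Submission
  imports Defs
begin

text \<open>Every block is Lipschitz on inputs of sup-norm at most \<open>B\<close>, and there its approximation
  is within a fixed multiple of \<open>2\<^sup>-\<^sup>\<alpha>\<close> of it: linear and softmax blocks are not approximated at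
  all, \<open>r\<^sub>\<alpha>\<close> is \<open>m\<^sub>\<alpha>(t, 0)\<close>, and the max tree \<open>M\<^sub>\<alpha>\<^sub>,\<^sub>n\<close> of height \<open>\<lceil>log\<^sub>2 n\<rceil> \<le> 7\<close> loses at most
  \<open>2\<^sup>-\<^sup>\<alpha>\<close> per level. So each block satisfies
  \<open>\<parallel>A\<^sup>\<alpha>(x') - A(x)\<parallel> \<le> L \<parallel>x' - x\<parallel> + K 2\<^sup>-\<^sup>\<alpha>\<close> for admissible inputs \<open>x, x'\<close>. Such estimates compose
  (with constants \<open>L\<^sub>2 L\<^sub>1\<close> and \<open>L\<^sub>2 K\<^sub>1 + K\<^sub>2\<close>) and survive adding a skip connection \<open>P x\<close>; for the
  whole model, taking \<open>x' = x\<close> gives the theorem with \<open>C = K\<close>.\<close>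

lemma ninf_Nil [simp]: "ninf [] = 0"
  by (simp add: ninf_def)

lemma ninf_Cons [simp]: "ninf (t # v) = max \<bar>t\<bar> (ninf v)"
  by (simp add: ninf_def)

lemma ninf_nonneg: "0 \<le> ninf v"
  by (induct v) auto

lemma abs_nth_le_ninf: "i < length v \<Longrightarrow> \<bar>v ! i\<bar> \<le> ninf v"
proof (induct v arbitrary: i)
  case (Cons a v)
  then show ?case by (cases i) force+
qed simp

lemma ninf_leI: "0 \<le> c \<Longrightarrow> (\<And>i. i < length v \<Longrightarrow> \<bar>v ! i\<bar> \<le> c) \<Longrightarrow> ninf v \<le> c"
proof (induct v)
  case (Cons a v)
  then show ?case using Cons(3)[of 0] Cons(3)[of "Suc _"] by auto
qed simp

lemma length_vsub [simp]: "length (vsub u v) = min (length u) (length v)"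
  by (simp add: vsub_def)

lemma nth_vsub [simp]: "i < length u \<Longrightarrow> i < length v \<Longrightarrow> vsub u v ! i = u ! i - v ! i"
  by (simp add: vsub_def)

lemma length_vadd [simp]: "length (vadd u v) = min (length u) (length v)"
  by (simp add: vadd_def)

lemma nth_vadd [simp]: "i < length u \<Longrightarrow> i < length v \<Longrightarrow> vadd u v ! i = u ! i + v ! i"
  by (simp add: vadd_def)

lemma length_matvec [simp]: "length (matvec A x) = length A"
  by (simp add: matvec_def)

lemma abs_nth_diff_le_ninf_vsub:
  "length u = length v \<Longrightarrow> i < length u \<Longrightarrow> \<bar>u ! i - v ! i\<bar> \<le> ninf (vsub u v)"
  using abs_nth_le_ninf[of i "vsub u v"] by simp

lemma ninf_vsub_leI:
  "length u = length v \<Longrightarrow> 0 \<le> c \<Longrightarrow> (\<And>i. i < length u \<Longrightarrow> \<bar>u ! i - v ! i\<bar> \<le> c)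
    \<Longrightarrow> ninf (vsub u v) \<le> c"
  by (rule ninf_leI) auto

lemma ninf_vsub_self [simp]: "ninf (vsub v v) = 0"
  using ninf_leI[of 0 "vsub v v"] ninf_nonneg[of "vsub v v"] by simp

lemma ninf_vsub_vadd_le:
  assumes "length a = n" "length a' = n" "length b = n" "length b' = n"
  shows "ninf (vsub (vadd a' b') (vadd a b)) \<le> ninf (vsub a' a) + ninf (vsub b' b)"
proof (rule ninf_vsub_leI)
  fix i assume i: "i < length (vadd a' b')"
  have "\<bar>vadd a' b' ! i - vadd a b ! i\<bar> \<le> \<bar>a' ! i - a ! i\<bar> + \<bar>b' ! i - b ! i\<bar>"
    using i assms by simp
  also have "\<dots> \<le> ninf (vsub a' a) + ninf (vsub b' b)"
    using i assms by (intro add_mono abs_nth_diff_le_ninf_vsub) auto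
  finally show "\<bar>vadd a' b' ! i - vadd a b ! i\<bar> \<le> ninf (vsub a' a) + ninf (vsub b' b)" .
qed (use assms ninf_nonneg in auto)

definition mat_abs_sum :: "real list list \<Rightarrow> real" where
  "mat_abs_sum A = sum_list (map (\<lambda>r. sum_list (map abs r)) A)"

lemma mat_abs_sum_nonneg: "0 \<le> mat_abs_sum A"
  unfolding mat_abs_sum_def by (auto intro!: sum_list_nonneg)

lemma row_abs_sum_le_mat_abs_sum: "r \<in> set A \<Longrightarrow> sum_list (map abs r) \<le> mat_abs_sum A"
  unfolding mat_abs_sum_def
  by (rule member_le_sum_list) (auto intro!: sum_list_nonneg)

lemma ninf_vsub_matvec_le:
  assumes "\<forall>r\<in>set A. length r = d" "length x = d" "length x' = d"
  shows "ninf (vsub (matvec A x') (matvec A x)) \<le> mat_abs_sum A * ninf (vsub x' x)"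
proof (rule ninf_vsub_leI)
  fix i assume i: "i < length (matvec A x')"
  then have r: "A ! i \<in> set A" by simp
  let ?r = "A ! i" and ?\<delta> = "ninf (vsub x' x)"
  have lr: "length ?r = d" using assms r by auto
  have "matvec A x' ! i - matvec A x ! i = (\<Sum>j<d. ?r ! j * (x' ! j - x ! j))"
    using i lr assms
    by (simp add: matvec_def sum_list_sum_nth atLeast0LessThan sum_subtractf[symmetric] algebra_simps)
  also have "\<bar>\<dots>\<bar> \<le> (\<Sum>j<d. \<bar>?r ! j\<bar> * ?\<delta>)"
    by (rule order_trans[OF sum_abs sum_mono])
      (auto simp: abs_mult assms intro!: mult_left_mono abs_nth_diff_le_ninf_vsub)
  also have "\<dots> = sum_list (map abs ?r) * ?\<delta>"
    using lr by (simp add: sum_distrib_right sum_list_sum_nth atLeast0LessThan)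
  also have "\<dots> \<le> mat_abs_sum A * ?\<delta>"
    by (rule mult_right_mono[OF row_abs_sum_le_mat_abs_sum[OF r] ninf_nonneg])
  finally show "\<bar>matvec A x' ! i - matvec A x ! i\<bar> \<le> mat_abs_sum A * ?\<delta>" .
qed (simp_all add: mat_abs_sum_nonneg ninf_nonneg)

lemma abs_Max_diff_le:
  fixes a b :: "real list"
  assumes "length a = length b" "a \<noteq> []" "\<And>j. j < length a \<Longrightarrow> \<bar>a ! j - b ! j\<bar> \<le> e"
  shows "\<bar>Max (set a) - Max (set b)\<bar> \<le> e"
proof -
  have "Max (set a) \<le> Max (set b) + e"
    if hyp: "length a = length b" "a \<noteq> []" "\<And>j. j < length a \<Longrightarrow> \<bar>a ! j - b ! j\<bar> \<le> e"
    for a b :: "real list"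
  proof -
    obtain j where j: "j < length a" "a ! j = Max (set a)"
      using Max_in[of "set a"] hyp(2) by (auto simp: in_set_conv_nth)
    have "b ! j \<le> Max (set b)" using j hyp(1) by (intro Max_ge) auto
    then show ?thesis using hyp(3)[OF j(1)] j by linarith
  qed
  note one_side = this
  have "Max (set a) \<le> Max (set b) + e" by (rule one_side) (use assms in auto)
  moreover have "Max (set b) \<le> Max (set a) + e"
    by (rule one_side) (use assms in \<open>auto simp: abs_minus_commute\<close>)
  ultimately show ?thesis by linarith
qed

lemma abs_exp_diff_le:
  fixes a b B :: real
  assumes "a \<le> B" "b \<le> B"
  shows "\<bar>exp a - exp b\<bar> \<le> exp B * \<bar>a - b\<bar>"
proof -
  have "exp x - exp y \<le> exp B * \<bar>x - y\<bar>" if "x \<le> B" for x y :: real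
  proof -
    have "exp x - exp y = exp x * (1 - exp (y - x))" by (simp add: exp_diff field_simps)
    also have "\<dots> \<le> exp x * (x - y)"
      using exp_ge_add_one_self[of "y - x"] by (intro mult_left_mono) (linarith, simp)
    also have "\<dots> \<le> exp x * \<bar>x - y\<bar>" by simp
    also have "\<dots> \<le> exp B * \<bar>x - y\<bar>" using that by (intro mult_right_mono) auto
    finally show ?thesis .
  qed
  from this[OF assms(1), of b] this[OF assms(2), of a] show ?thesis
    by (auto simp: abs_minus_commute abs_le_iff)
qed

lemma abs_exp_diff_le_relative:
  fixes t t' B :: real
  assumes "\<bar>t\<bar> \<le> B" "\<bar>t'\<bar> \<le> B"
  shows "\<bar>exp t' - exp t\<bar> \<le> exp (2 * B) * \<bar>t' - t\<bar> * exp t'"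
proof -
  have "\<bar>exp t' - exp t\<bar> \<le> exp B * \<bar>t' - t\<bar>"
    using assms by (intro abs_exp_diff_le) auto
  also have "exp B = exp (2 * B) * exp (- B)"
    by (simp flip: exp_add)
  also have "exp (2 * B) * exp (- B) * \<bar>t' - t\<bar> \<le> exp (2 * B) * exp t' * \<bar>t' - t\<bar>"
    using assms by (intro mult_right_mono mult_left_mono) (auto simp: abs_le_iff)
  finally show ?thesis by (simp add: mult_ac)
qed

lemma abs_ratio_diff_le:
  fixes a b S S' :: real
  assumes "0 < b" "b \<le> S" "0 < S'"
  shows "\<bar>a / S' - b / S\<bar> \<le> \<bar>a - b\<bar> / S' + \<bar>S - S'\<bar> / S'"
proof -
  have "a / S' - b / S = (a - b) / S' + (b / S) * ((S - S') / S')"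
    using assms by (simp add: field_simps)
  also have "\<bar>\<dots>\<bar> \<le> \<bar>a - b\<bar> / S' + (b / S) * (\<bar>S - S'\<bar> / S')"
    using assms by (auto intro: order_trans[OF abs_triangle_ineq] simp: abs_mult abs_divide)
  also have "\<dots> \<le> \<bar>a - b\<bar> / S' + 1 * (\<bar>S - S'\<bar> / S')"
    using assms by (intro add_left_mono mult_right_mono) auto
  finally show ?thesis by simp
qed

lemma sum_list_map_exp: "sum_list (map exp x) = (\<Sum>j<length x. exp (x ! j :: real))"
  by (simp add: sum_list_sum_nth atLeast0LessThan)

lemma softmax_lipschitz:
  assumes len: "length x = d" "length x' = d" and bnd: "ninf x \<le> B" "ninf x' \<le> B"
    and i: "i < d"
  shows "\<bar>exp (x' ! i) / sum_list (map exp x') - exp (x ! i) / sum_list (map exp x)\<bar>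
         \<le> 2 * exp (2 * B) * ninf (vsub x' x)"
proof -
  define \<kappa> where "\<kappa> = exp (2 * B) * ninf (vsub x' x)"
  define S where "S = (\<Sum>j<d. exp (x ! j))"
  define S' where "S' = (\<Sum>j<d. exp (x' ! j))"
  have \<kappa>: "0 \<le> \<kappa>" unfolding \<kappa>_def by (simp add: ninf_nonneg)
  have rel: "\<bar>exp (x' ! j) - exp (x ! j)\<bar> \<le> \<kappa> * exp (x' ! j)" if "j < d" for j
  proof -
    have "\<bar>exp (x' ! j) - exp (x ! j)\<bar> \<le> exp (2 * B) * \<bar>x' ! j - x ! j\<bar> * exp (x' ! j)"
      using that len bnd abs_nth_le_ninf[of j x] abs_nth_le_ninf[of j x']
      by (intro abs_exp_diff_le_relative) auto
    also have "\<dots> \<le> \<kappa> * exp (x' ! j)"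
      unfolding \<kappa>_def using that len
      by (intro mult_right_mono mult_left_mono abs_nth_diff_le_ninf_vsub) auto
    finally show ?thesis .
  qed
  have "\<bar>S - S'\<bar> \<le> (\<Sum>j<d. \<bar>exp (x' ! j) - exp (x ! j)\<bar>)"
    unfolding S_def S'_def
    by (subst abs_minus_commute) (simp add: sum_subtractf[symmetric] sum_abs)
  also have "\<dots> \<le> \<kappa> * S'"
    unfolding S'_def sum_distrib_left by (intro sum_mono rel) simp
  finally have sums: "\<bar>S - S'\<bar> \<le> \<kappa> * S'" .
  have terms: "exp (x ! i) \<le> S" "exp (x' ! i) \<le> S'"
    unfolding S_def S'_def using i by (auto intro: member_le_sum)
  then have S': "0 < S'" by (meson exp_gt_zero less_le_trans)
  have "\<bar>exp (x' ! i) / S' - exp (x ! i) / S\<bar>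
      \<le> \<bar>exp (x' ! i) - exp (x ! i)\<bar> / S' + \<bar>S - S'\<bar> / S'"
    using terms S' by (intro abs_ratio_diff_le) auto
  also have "\<dots> \<le> \<kappa> * exp (x' ! i) / S' + \<kappa> * S' / S'"
    using rel[OF i] sums S' by (intro add_mono divide_right_mono) auto
  also have "\<dots> \<le> \<kappa> + \<kappa>"
    using \<kappa> terms S' by (intro add_mono) (auto simp: pos_divide_le_eq mult_left_mono)
  finally show ?thesis
    using len unfolding S_def S'_def \<kappa>_def by (simp add: sum_list_map_exp mult_ac)
qed

text \<open>\<open>r\<^sub>\<alpha>(t) = m\<^sub>\<alpha>(t, 0)\<close> and \<open>r\<^sub>\<alpha>(t) - t = m\<^sub>\<alpha>(0, -t)\<close>.\<close>

lemma ralpha_approx_relu: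
  assumes hq: "\<forall>a\<in>{0..1}. \<forall>b\<in>{0..1}. \<bar>malpha q a b - max a b\<bar> \<le> e"
    and t: "\<bar>t\<bar> \<le> 1"
  shows "\<bar>ralpha q t - max t 0\<bar> \<le> e"
proof (cases "0 \<le> t")
  case True
  then have "\<bar>malpha q t 0 - max t 0\<bar> \<le> e" using bspec[OF bspec[OF hq, of t], of 0] t by auto
  then show ?thesis by (simp add: malpha_def ralpha_def)
next
  case False
  then have "\<bar>malpha q 0 (- t) - max 0 (- t)\<bar> \<le> e" using bspec[OF bspec[OF hq, of 0], of "- t"] t by auto
  moreover have "malpha q 0 (- t) - max 0 (- t) = ralpha q t - max t 0"
    using False by (simp add: malpha_def ralpha_def field_simps)
  ultimately show ?thesis by simp
qed

lemma rtilde_approx_relu: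
  assumes hq: "\<forall>a\<in>{0..1}. \<forall>b\<in>{0..1}. \<bar>malpha q a b - max a b\<bar> \<le> e"
    and B: "0 < B" and t: "\<bar>t\<bar> \<le> B"
  shows "\<bar>rtilde q B t - max t 0\<bar> \<le> B * e"
proof -
  have "rtilde q B t - max t 0 = B * (ralpha q (t / B) - max (t / B) 0)"
    using B by (simp add: rtilde_def right_diff_distrib max_def field_simps)
  moreover have "\<bar>ralpha q (t / B) - max (t / B) 0\<bar> \<le> e"
    using t B by (intro ralpha_approx_relu[OF hq]) (simp add: abs_divide)
  ultimately show ?thesis
    using B by (simp add: abs_mult)
qed

lemma Mtree_singleton [simp]: "Mtree q [z] = z"
  by (simp add: Mtree.simps)

lemma Mtree_split:
  "2 \<le> length xs \<Longrightarrow>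
    Mtree q xs = malpha q (Mtree q (take (length xs div 2) xs)) (Mtree q (drop (length xs div 2) xs))"
  by (subst Mtree.simps) auto

lemma abs_malpha_sub_max_le:
  assumes hq: "\<forall>a\<in>{0..1}. \<forall>b\<in>{0..1}. \<bar>malpha q a b - max a b\<bar> \<le> e"
    and "a \<in> {0..1}" "b \<in> {0..1}" "\<bar>a - a'\<bar> \<le> \<delta>" "\<bar>b - b'\<bar> \<le> \<delta>"
  shows "\<bar>malpha q a b - max a' b'\<bar> \<le> e + \<delta>"
proof -
  have "\<bar>malpha q a b - max a b\<bar> \<le> e" using hq assms(2,3) by blast
  moreover have "\<bar>max a b - max a' b'\<bar> \<le> \<delta>"
    using assms(4,5) by (auto simp: abs_le_iff max_def)
  ultimately show ?thesis by linarith
qed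

text \<open>Every level of the tree adds an error of at most \<open>e\<close>; the margin \<open>(h - 1) e\<close> of the inputs
  keeps all intermediate values of a tree of height \<open>h\<close> inside \<open>[0, 1]\<close>, where the accuracy
  assumption on \<open>m\<^sub>\<alpha>\<close> applies.\<close>

lemma Mtree_approx_Max:
  assumes hq: "\<forall>a\<in>{0..1}. \<forall>b\<in>{0..1}. \<bar>malpha q a b - max a b\<bar> \<le> e" and e: "0 \<le> e"
  shows "xs \<noteq> [] \<Longrightarrow> length xs \<le> 2 ^ h \<Longrightarrow>
    \<forall>z\<in>set xs. (real h - 1) * e \<le> z \<and> z \<le> 1 - (real h - 1) * e \<Longrightarrow>
    \<bar>Mtree q xs - Max (set xs)\<bar> \<le> real h * e"
proof (induct h arbitrary: xs)
  case 0
  then obtain z where "xs = [z]" by (cases xs) auto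
  then show ?case by simp
next
  case (Suc h)
  show ?case
  proof (cases "length xs = 1")
    case True
    then obtain z where "xs = [z]" by (cases xs) auto
    then show ?thesis using e by simp
  next
    case False
    define l where "l = take (length xs div 2) xs"
    define r where "r = drop (length xs div 2) xs"
    have "length xs \<noteq> 0" using Suc(2) by simp
    with False have len: "2 \<le> length xs" by linarith
    have parts: "xs = l @ r" unfolding l_def r_def by simp
    have ne: "l \<noteq> []" "r \<noteq> []" using len unfolding l_def r_def by auto
    have margin: "\<forall>z\<in>set l \<union> set r. real h * e \<le> z \<and> z \<le> 1 - real h * e"
      using Suc(4) parts by auto
    have IH: "\<bar>Mtree q ys - Max (set ys)\<bar> \<le> real h * e" if "ys \<in> {l, r}" for ys
    proof (rule Suc(1))
      show "ys \<noteq> []" using that ne by auto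
      show "length ys \<le> 2 ^ h" using that Suc(3) by (auto simp: l_def r_def)
      show "\<forall>z\<in>set ys. (real h - 1) * e \<le> z \<and> z \<le> 1 - (real h - 1) * e"
      proof
        fix z assume "z \<in> set ys"
        then have "real h * e \<le> z \<and> z \<le> 1 - real h * e" using that margin by auto
        then show "(real h - 1) * e \<le> z \<and> z \<le> 1 - (real h - 1) * e"
          using e by (simp add: left_diff_distrib)
      qed
    qed
    have "Max (set l) \<in> set l" "Max (set r) \<in> set r" using ne by auto
    then have "real h * e \<le> Max (set ys) \<and> Max (set ys) \<le> 1 - real h * e" if "ys \<in> {l, r}" for ys
      using that margin by auto
    then have "Mtree q l \<in> {0..1}" "Mtree q r \<in> {0..1}"
      using IH[of l] IH[of r] by (fastforce simp: abs_le_iff)+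
    then have "\<bar>Mtree q xs - max (Max (set l)) (Max (set r))\<bar> \<le> e + real h * e"
      unfolding Mtree_split[OF len] l_def[symmetric] r_def[symmetric]
      by (rule abs_malpha_sub_max_le[OF hq _ _ IH IH]) auto
    moreover have "Max (set xs) = max (Max (set l)) (Max (set r))"
      using ne by (simp add: parts Max_Un)
    ultimately show ?thesis by (simp add: algebra_simps)
  qed
qed

lemma le_two_power_ceiling_log2: "1 \<le> n \<Longrightarrow> n \<le> 2 ^ nat \<lceil>log 2 (real n)\<rceil>"
proof -
  assume n: "1 \<le> n"
  have "real n = 2 powr log 2 (real n)"
    using n by simp
  also have "\<dots> \<le> 2 powr \<lceil>log 2 (real n)\<rceil>"
    by (intro powr_mono) auto
  also have "\<dots> = real (2 ^ nat \<lceil>log 2 (real n)\<rceil>)"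
    using n by (simp add: powr_realpow[symmetric])
  finally show ?thesis by linarith
qed

lemma ceiling_log2_le: "1 \<le> n \<Longrightarrow> n \<le> 2 ^ k \<Longrightarrow> nat \<lceil>log 2 (real n)\<rceil> \<le> k"
  using log2_of_power_le[of n k] by (simp add: ceiling_le_iff nat_le_iff)

lemma Bprime_eq:
  "1 \<le> n \<Longrightarrow>
    Bprime \<alpha> n B = B / (1/2 - (real (nat \<lceil>log 2 (real n)\<rceil>) - 1) * 2 powr (- real \<alpha>))"
  by (simp add: Bprime_def)

text \<open>The rescaling \<open>y \<mapsto> y / B' + 1/2\<close> maps \<open>[-B, B]\<close> onto
  \<open>[(h - 1) 2\<^sup>-\<^sup>\<alpha>, 1 - (h - 1) 2\<^sup>-\<^sup>\<alpha>]\<close>, the input range required by \<open>Mtree_approx_Max\<close>.\<close>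

lemma Mtilde_approx_Max:
  fixes q :: "real poly" and \<alpha> :: nat and ys :: "real list"
  defines "e \<equiv> 2 powr (- real \<alpha>)" and "h \<equiv> nat \<lceil>log 2 (real (length ys))\<rceil>"
  assumes hq: "\<forall>a\<in>{0..1}. \<forall>b\<in>{0..1}. \<bar>malpha q a b - max a b\<bar> \<le> e"
    and B: "0 < B" and ne: "ys \<noteq> []" and ys: "\<forall>y\<in>set ys. \<bar>y\<bar> \<le> B"
    and denom: "0 < 1/2 - (real h - 1) * e"
  shows "\<bar>Mtilde q \<alpha> B ys - Max (set ys)\<bar> \<le> Bprime \<alpha> (length ys) B * real h * e"
proof -
  define D where "D = 1/2 - (real h - 1) * e"
  define B' where "B' = B / D"
  define f where "f = (\<lambda>y. y / B' + 1/2)"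
  have "1 \<le> length ys" using ne by (simp add: Suc_le_eq)
  then have B'_eq: "Bprime \<alpha> (length ys) B = B'"
    by (simp add: Bprime_eq B'_def D_def e_def h_def)
  have "0 < D" using denom by (simp add: D_def)
  then have B': "0 < B'" using B by (simp add: B'_def)
  have "mono f" using B' by (simp add: f_def mono_def divide_right_mono)
  then have Max_f: "Max (set (map f ys)) = f (Max (set ys))"
    using ne by (simp add: mono_Max_commute)
  have margin: "\<forall>z\<in>set (map f ys). (real h - 1) * e \<le> z \<and> z \<le> 1 - (real h - 1) * e"
  proof
    fix z assume "z \<in> set (map f ys)"
    then obtain y where y: "y \<in> set ys" "z = f y" by auto
    have "\<bar>y / B'\<bar> = \<bar>y\<bar> / B * D" using B \<open>0 < D\<close> by (simp add: B'_def abs_divide abs_mult)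
    also have "\<dots> \<le> 1 * D" using ys y(1) B \<open>0 < D\<close> by (intro mult_right_mono) auto
    finally have "\<bar>y / B'\<bar> \<le> D" by simp
    then show "(real h - 1) * e \<le> z \<and> z \<le> 1 - (real h - 1) * e"
      unfolding y(2) f_def D_def abs_le_iff by linarith
  qed
  have "length (map f ys) \<le> 2 ^ h"
    using ne le_two_power_ceiling_log2[of "length ys"] by (simp add: h_def Suc_le_eq)
  then have Mtree: "\<bar>Mtree q (map f ys) - Max (set (map f ys))\<bar> \<le> real h * e"
    using Mtree_approx_Max[OF hq _ _ _ margin] ne by (simp add: e_def)
  have "Mtilde q \<alpha> B ys = B' * (Mtree q (map f ys) - 1/2)"
    unfolding Mtilde_def Let_def B'_eq f_def by simp
  moreover have "f (Max (set ys)) = Max (set ys) / B' + 1/2" by (simp add: f_def)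
  ultimately have "Mtilde q \<alpha> B ys - Max (set ys) = B' * (Mtree q (map f ys) - Max (set (map f ys)))"
    using B' unfolding Max_f by (simp add: field_simps)
  then show ?thesis
    using Mtree B' by (simp add: B'_eq abs_mult mult.assoc)
qed

lemma Mtilde_approx_Max_of_length_le_128:
  fixes q :: "real poly"
  assumes hq: "\<forall>a\<in>{0..1}. \<forall>b\<in>{0..1}. \<bar>malpha q a b - max a b\<bar> \<le> 2 powr (- real \<alpha>)"
    and \<alpha>: "4 \<le> \<alpha>" and B: "0 < B" and ne: "ys \<noteq> []" and len: "length ys \<le> 128"
    and ys: "\<forall>y\<in>set ys. \<bar>y\<bar> \<le> B"
  shows "\<bar>Mtilde q \<alpha> B ys - Max (set ys)\<bar> \<le> 56 * B * 2 powr (- real \<alpha>)"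
proof -
  define e where "e = (2::real) powr (- real \<alpha>)"
  define h where "h = nat \<lceil>log 2 (real (length ys))\<rceil>"
  have e: "0 \<le> e" "e \<le> 1/16"
    using \<alpha> powr_mono[of "- real \<alpha>" "- 4" 2] by (auto simp: e_def powr_minus)
  have h: "h \<le> 7"
    using ceiling_log2_le[of "length ys" 7] ne len by (simp add: h_def Suc_le_eq)
  have "(real h - 1) * e \<le> 6 * (1/16)"
  proof (cases "h = 0")
    case False
    then show ?thesis using h e by (intro mult_mono) auto
  qed (use e in simp)
  then have D: "1/8 \<le> 1/2 - (real h - 1) * e" by simp
  have n: "1 \<le> length ys" using ne by (simp add: Suc_le_eq)
  have Bprime: "Bprime \<alpha> (length ys) B = B / (1/2 - (real h - 1) * e)"
    by (simp add: Bprime_eq[OF n] h_def e_def)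
  have "\<bar>Mtilde q \<alpha> B ys - Max (set ys)\<bar> \<le> Bprime \<alpha> (length ys) B * real h * e"
    using Mtilde_approx_Max[OF hq B ne ys] D by (simp add: h_def e_def)
  also have "\<dots> \<le> B / (1/8) * 7 * e"
    unfolding Bprime using D B h e by (intro mult_right_mono mult_mono divide_left_mono) auto
  finally show ?thesis by (simp add: e_def)
qed

definition approx_error_bound ::
  "nat \<Rightarrow> nat \<Rightarrow> (vec \<Rightarrow> bool) \<Rightarrow> (nat \<Rightarrow> vec \<Rightarrow> bool) \<Rightarrow> (vec \<Rightarrow> vec) \<Rightarrow> (nat \<Rightarrow> vec \<Rightarrow> vec)
    \<Rightarrow> real \<Rightarrow> real \<Rightarrow> bool" where
  "approx_error_bound d d' P P' f g L K \<longleftrightarrow> 0 \<le> L \<and>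
     (\<forall>\<alpha>\<ge>4. \<forall>x x'. length x = d \<longrightarrow> length x' = d \<longrightarrow> P x \<longrightarrow> P' \<alpha> x' \<longrightarrow>
        length (f x) = d' \<and> length (g \<alpha> x') = d' \<and>
        ninf (vsub (g \<alpha> x') (f x)) \<le> L * ninf (vsub x' x) + K * 2 powr (- real \<alpha>))"

lemma approx_error_bound_id:
  "approx_error_bound d d (\<lambda>_. True) (\<lambda>_ _. True) (\<lambda>x. x) (\<lambda>_ x. x) 1 0"
  by (simp add: approx_error_bound_def)

lemma approx_error_boundD:
  assumes "approx_error_bound d d' P P' f g L K" "4 \<le> \<alpha>" "length x = d" "length x' = d" "P x" "P' \<alpha> x'"
  shows "0 \<le> L" "length (f x) = d'" "length (g \<alpha> x') = d'"
    "ninf (vsub (g \<alpha> x') (f x)) \<le> L * ninf (vsub x' x) + K * 2 powr (- real \<alpha>)"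
  using assms unfolding approx_error_bound_def by blast+

lemma approx_error_bound_comp:
  assumes f: "approx_error_bound d d1 P P' f g L1 K1"
    and h: "approx_error_bound d1 d2 Q Q' h k L2 K2"
  shows "approx_error_bound d d2 (\<lambda>x. P x \<and> Q (f x)) (\<lambda>\<alpha> x. P' \<alpha> x \<and> Q' \<alpha> (g \<alpha> x))
    (\<lambda>x. h (f x)) (\<lambda>\<alpha> x. k \<alpha> (g \<alpha> x)) (L2 * L1) (L2 * K1 + K2)"
  unfolding approx_error_bound_def
proof (intro conjI allI impI)
  show "0 \<le> L2 * L1" using f h by (simp add: approx_error_bound_def)
  fix \<alpha> :: nat and x x' :: vec
  assume a: "4 \<le> \<alpha>" "length x = d" "length x' = d" "P x \<and> Q (f x)" "P' \<alpha> x' \<and> Q' \<alpha> (g \<alpha> x')"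
  then have adm: "P x" "Q (f x)" "P' \<alpha> x'" "Q' \<alpha> (g \<alpha> x')" by simp_all
  note 1 = approx_error_boundD[OF f a(1-3) adm(1,3)]
  note 2 = approx_error_boundD[OF h a(1) 1(2,3) adm(2,4)]
  show "length (h (f x)) = d2" "length (k \<alpha> (g \<alpha> x')) = d2" using 1 2 by simp_all
  have "L2 * ninf (vsub (g \<alpha> x') (f x)) \<le> L2 * (L1 * ninf (vsub x' x) + K1 * 2 powr (- real \<alpha>))"
    using 1 2 by (intro mult_left_mono) simp_all
  with 2 show "ninf (vsub (k \<alpha> (g \<alpha> x')) (h (f x)))
      \<le> L2 * L1 * ninf (vsub x' x) + (L2 * K1 + K2) * 2 powr (- real \<alpha>)"
    by (simp add: algebra_simps)
qed

lemma approx_error_bound_mono: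
  assumes "approx_error_bound d d' P P' f g L K"
    and "\<And>x. Q x \<Longrightarrow> P x" and "\<And>\<alpha> x. Q' \<alpha> x \<Longrightarrow> P' \<alpha> x"
  shows "approx_error_bound d d' Q Q' f g L K"
  using assms unfolding approx_error_bound_def by blast

lemma approx_error_bound_add_matvec:
  assumes fg: "approx_error_bound d d' P P' f g L K"
    and M: "\<forall>r\<in>set M. length r = d" "length M = d'"
  shows "approx_error_bound d d' P P' (\<lambda>x. vadd (f x) (matvec M x)) (\<lambda>\<alpha> x. vadd (g \<alpha> x) (matvec M x))
    (L + mat_abs_sum M) K"
  unfolding approx_error_bound_def
proof (intro conjI allI impI)
  show "0 \<le> L + mat_abs_sum M"
    using fg mat_abs_sum_nonneg[of M] by (simp add: approx_error_bound_def)
  fix \<alpha> :: nat and x x' :: vec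
  assume a: "4 \<le> \<alpha>" "length x = d" "length x' = d" "P x" "P' \<alpha> x'"
  note 1 = approx_error_boundD[OF fg a]
  show "length (vadd (f x) (matvec M x)) = d'" "length (vadd (g \<alpha> x') (matvec M x')) = d'"
    using 1 M by simp_all
  have "ninf (vsub (vadd (g \<alpha> x') (matvec M x')) (vadd (f x) (matvec M x)))
      \<le> ninf (vsub (g \<alpha> x') (f x)) + ninf (vsub (matvec M x') (matvec M x))"
    using 1 M by (intro ninf_vsub_vadd_le) auto
  also have "\<dots> \<le> (L * ninf (vsub x' x) + K * 2 powr (- real \<alpha>)) + mat_abs_sum M * ninf (vsub x' x)"
    using 1(4) ninf_vsub_matvec_le[OF M(1) a(2,3)] by (rule add_mono)
  finally show "ninf (vsub (vadd (g \<alpha> x') (matvec M x')) (vadd (f x) (matvec M x)))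
      \<le> (L + mat_abs_sum M) * ninf (vsub x' x) + K * 2 powr (- real \<alpha>)"
    by (simp add: algebra_simps)
qed

lemma approx_error_bound_at_same_input:
  assumes "approx_error_bound d d' P P' f g L K" "4 \<le> \<alpha>" "length x = d" "P x" "P' \<alpha> x"
  shows "ninf (vsub (g \<alpha> x) (f x)) \<le> K * 2 powr (- real \<alpha>)"
  using approx_error_boundD(4)[OF assms(1-3) assms(3-5)] by simp

lemma comp_basic_Nil: "comp_basic ev [] = (\<lambda>x. x)"
  by (simp add: comp_basic_def fun_eq_iff)

lemma comp_basic_Cons: "comp_basic ev (b # G) = (\<lambda>x. comp_basic ev G (ev b x))"
  by (simp add: comp_basic_def fun_eq_iff)

lemma bounded_chain_Nil: "bounded_chain ev B [] = (\<lambda>_. True)"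
  by (simp add: bounded_chain_def fun_eq_iff)

lemma bounded_chain_Cons:
  "bounded_chain ev B (b # G) = (\<lambda>x. ninf x \<le> B \<and> bounded_chain ev B G (ev b x))"
  by (auto simp: bounded_chain_def fun_eq_iff less_Suc_eq_0_disj comp_basic_Cons comp_basic_Nil)

lemma eval_block_Basic: "eval_block ev (Basic b) = ev b"
  by (simp add: fun_eq_iff)

lemma eval_block_Residual:
  "eval_block ev (Residual G M) = (\<lambda>x. vadd (comp_basic ev G x) (matvec M x))"
  by (simp add: fun_eq_iff)

lemma bounded_block_Basic: "bounded_block ev B (Basic b) = (\<lambda>x. ninf x \<le> B)"
  by (simp add: fun_eq_iff)

lemma bounded_block_Residual:
  "bounded_block ev B (Residual G M) = (\<lambda>x. ninf x \<le> B \<and> bounded_chain ev B G x)"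
  by (simp add: fun_eq_iff)

lemma eval_model_Nil: "eval_model ev [] = (\<lambda>x. x)"
  by (simp add: eval_model_def fun_eq_iff)

lemma eval_model_Cons: "eval_model ev (blk # F) = (\<lambda>x. eval_model ev F (eval_block ev blk x))"
  by (simp add: eval_model_def fun_eq_iff)

lemma bounded_model_Nil: "bounded_model ev B [] = (\<lambda>_. True)"
  by (simp add: bounded_model_def fun_eq_iff)

lemma bounded_model_Cons:
  "bounded_model ev B (blk # F) =
    (\<lambda>x. bounded_block ev B blk x \<and> bounded_model ev B F (eval_block ev blk x))"
  by (auto simp: bounded_model_def fun_eq_iff less_Suc_eq_0_disj eval_model_Cons eval_model_Nil)

lemma linear_block_error:
  assumes "length c = length A" "\<forall>r\<in>set A. length r = d"
  shows "approx_error_bound d (length A) P P' (eval_basic (Linear A c))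
    (\<lambda>\<alpha>. approx_basic (q \<alpha>) \<alpha> B (Linear A c)) (mat_abs_sum A) 0"
  unfolding approx_error_bound_def
proof (intro conjI allI impI)
  fix \<alpha> :: nat and x x' :: vec
  assume a: "4 \<le> \<alpha>" "length x = d" "length x' = d" "P x" "P' \<alpha> x'"
  show "length (eval_basic (Linear A c) x) = length A"
    "length (approx_basic (q \<alpha>) \<alpha> B (Linear A c) x') = length A"
    using assms by simp_all
  have "ninf (vsub (approx_basic (q \<alpha>) \<alpha> B (Linear A c) x') (eval_basic (Linear A c) x))
      \<le> ninf (vsub (matvec A x') (matvec A x)) + ninf (vsub c c)"
    using assms by (simp only: approx_basic.simps eval_basic.simps) (rule ninf_vsub_vadd_le; simp)
  also have "\<dots> \<le> mat_abs_sum A * ninf (vsub x' x)"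
    using ninf_vsub_matvec_le[OF assms(2) a(2,3)] by simp
  finally show "ninf (vsub (approx_basic (q \<alpha>) \<alpha> B (Linear A c) x') (eval_basic (Linear A c) x))
      \<le> mat_abs_sum A * ninf (vsub x' x) + 0 * 2 powr (- real \<alpha>)" by simp
qed (rule mat_abs_sum_nonneg)

lemma softmax_block_error:
  "approx_error_bound d d (\<lambda>x. ninf x \<le> B) (\<lambda>_ x. ninf x \<le> B) (eval_basic Softmax)
    (\<lambda>\<alpha>. approx_basic (q \<alpha>) \<alpha> B Softmax) (2 * exp (2 * B)) 0"
  unfolding approx_error_bound_def
proof (intro conjI allI impI)
  fix \<alpha> :: nat and x x' :: vec
  assume a: "4 \<le> \<alpha>" "length x = d" "length x' = d" "ninf x \<le> B" "ninf x' \<le> B"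
  show "length (eval_basic Softmax x) = d" "length (approx_basic (q \<alpha>) \<alpha> B Softmax x') = d"
    using a by simp_all
  show "ninf (vsub (approx_basic (q \<alpha>) \<alpha> B Softmax x') (eval_basic Softmax x))
      \<le> 2 * exp (2 * B) * ninf (vsub x' x) + 0 * 2 powr (- real \<alpha>)"
    using a softmax_lipschitz[OF a(2-5)] by (intro ninf_vsub_leI) (simp_all add: ninf_nonneg)
qed simp

context
  fixes p :: "nat \<Rightarrow> real poly" and B :: real
  assumes p: "\<forall>\<alpha>. \<forall>a\<in>{0..1}. \<forall>b\<in>{0..1}. \<bar>malpha (p \<alpha>) a b - max a b\<bar> \<le> 2 powr (- real \<alpha>)"
    and B: "0 < B"
begin

lemma relu_block_error:
  "approx_error_bound d d (\<lambda>x. ninf x \<le> B) (\<lambda>_ x. ninf x \<le> B) (eval_basic ReLU)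
    (\<lambda>\<alpha>. approx_basic (p \<alpha>) \<alpha> B ReLU) 1 B"
  unfolding approx_error_bound_def
proof (intro conjI allI impI)
  fix \<alpha> :: nat and x x' :: vec
  assume a: "4 \<le> \<alpha>" "length x = d" "length x' = d" "ninf x \<le> B" "ninf x' \<le> B"
  show "length (eval_basic ReLU x) = d" "length (approx_basic (p \<alpha>) \<alpha> B ReLU x') = d"
    using a by simp_all
  show "ninf (vsub (approx_basic (p \<alpha>) \<alpha> B ReLU x') (eval_basic ReLU x))
      \<le> 1 * ninf (vsub x' x) + B * 2 powr (- real \<alpha>)"
  proof (rule ninf_vsub_leI)
    fix i assume "i < length (approx_basic (p \<alpha>) \<alpha> B ReLU x')"
    then have i: "i < d" using a by simp
    have "\<bar>rtilde (p \<alpha>) B (x' ! i) - max (x' ! i) 0\<bar> \<le> B * 2 powr (- real \<alpha>)"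
      using p B abs_nth_le_ninf[of i x'] i a by (intro rtilde_approx_relu) auto
    moreover have "\<bar>max (x' ! i) 0 - max (x ! i) 0\<bar> \<le> ninf (vsub x' x)"
      using abs_nth_diff_le_ninf_vsub[of x' x i] i a by (auto simp: max_def abs_le_iff)
    ultimately show "\<bar>approx_basic (p \<alpha>) \<alpha> B ReLU x' ! i - eval_basic ReLU x ! i\<bar>
        \<le> 1 * ninf (vsub x' x) + B * 2 powr (- real \<alpha>)"
      using i a by simp
  qed (use a B ninf_nonneg in simp_all)
qed simp

lemma maxpool_block_error:
  assumes k0: "1 \<le> k0" "k0 \<le> 10" and W: "\<forall>w\<in>set W. length w = k0\<^sup>2 \<and> (\<forall>j\<in>set w. j < d)"
  shows "approx_error_bound d (length W) (\<lambda>x. ninf x \<le> B) (\<lambda>_ x. ninf x \<le> B)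
    (eval_basic (MaxPool k0 W)) (\<lambda>\<alpha>. approx_basic (p \<alpha>) \<alpha> B (MaxPool k0 W)) 1 (56 * B)"
  unfolding approx_error_bound_def
proof (intro conjI allI impI)
  fix \<alpha> :: nat and x x' :: vec
  assume a: "4 \<le> \<alpha>" "length x = d" "length x' = d" "ninf x \<le> B" "ninf x' \<le> B"
  show "length (eval_basic (MaxPool k0 W) x) = length W"
    "length (approx_basic (p \<alpha>) \<alpha> B (MaxPool k0 W) x') = length W"
    by simp_all
  show "ninf (vsub (approx_basic (p \<alpha>) \<alpha> B (MaxPool k0 W) x') (eval_basic (MaxPool k0 W) x))
      \<le> 1 * ninf (vsub x' x) + 56 * B * 2 powr (- real \<alpha>)"
  proof (rule ninf_vsub_leI)
    fix i assume "i < length (approx_basic (p \<alpha>) \<alpha> B (MaxPool k0 W) x')"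
    then have i: "i < length W" by simp
    define ys where "ys = map (\<lambda>j. x ! j) (W ! i)"
    define ys' where "ys' = map (\<lambda>j. x' ! j) (W ! i)"
    have w: "length (W ! i) = k0\<^sup>2" "\<forall>j\<in>set (W ! i). j < d" using W i by auto
    have "k0\<^sup>2 \<le> 10\<^sup>2" using k0 by (intro power_mono) auto
    then have len: "ys' \<noteq> []" "length ys' \<le> 128" "length ys = length ys'"
      using w k0 by (auto simp: ys_def ys'_def)
    have "\<bar>x' ! j\<bar> \<le> B" if "j \<in> set (W ! i)" for j
      using that w a abs_nth_le_ninf[of j x'] by auto
    then have "\<bar>Mtilde (p \<alpha>) \<alpha> B ys' - Max (set ys')\<bar> \<le> 56 * B * 2 powr (- real \<alpha>)"
      using p a B len
      by (intro Mtilde_approx_Max_of_length_le_128) (auto simp: ys'_def)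
    moreover have "\<bar>Max (set ys') - Max (set ys)\<bar> \<le> ninf (vsub x' x)"
      using len w a
      by (intro abs_Max_diff_le) (auto simp: ys_def ys'_def intro!: abs_nth_diff_le_ninf_vsub)
    ultimately show "\<bar>approx_basic (p \<alpha>) \<alpha> B (MaxPool k0 W) x' ! i - eval_basic (MaxPool k0 W) x ! i\<bar>
        \<le> 1 * ninf (vsub x' x) + 56 * B * 2 powr (- real \<alpha>)"
      using i by (simp add: ys_def ys'_def)
  qed (use B ninf_nonneg in simp_all)
qed simp

lemma basic_block_error:
  assumes "bdim b d = Some d'"
  shows "\<exists>L K. approx_error_bound d d' (\<lambda>x. ninf x \<le> B) (\<lambda>_ x. ninf x \<le> B)
    (eval_basic b) (\<lambda>\<alpha>. approx_basic (p \<alpha>) \<alpha> B b) L K"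
proof (cases b)
  case (Linear A c)
  with assms have "length c = length A" "\<forall>r\<in>set A. length r = d" "d' = length A"
    by (auto split: if_splits)
  with Linear show ?thesis
    using linear_block_error[of c A d "\<lambda>x. ninf x \<le> B" "\<lambda>_ x. ninf x \<le> B" p B] by blast
next
  case ReLU
  with assms show ?thesis
    using relu_block_error by auto
next
  case (MaxPool k0 W)
  with assms show ?thesis
    using maxpool_block_error[of k0 W d] by (auto split: if_splits)
next
  case Softmax
  with assms show ?thesis
    using softmax_block_error[of d' B p] by auto
qed

lemma chain_error:
  "chain_dim G d = Some d' \<Longrightarrow> \<exists>L K. approx_error_bound d d'
    (bounded_chain eval_basic B G) (\<lambda>\<alpha>. bounded_chain (approx_basic (p \<alpha>) \<alpha> B) B G)
    (comp_basic eval_basic G) (\<lambda>\<alpha>. comp_basic (approx_basic (p \<alpha>) \<alpha> B) G) L K"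
proof (induct G arbitrary: d)
  case Nil
  then show ?case
    using approx_error_bound_id by (auto simp: comp_basic_Nil bounded_chain_Nil)
next
  case (Cons b G)
  then obtain d1 where d1: "bdim b d = Some d1" "chain_dim G d1 = Some d'"
    by (auto split: option.splits)
  obtain L1 K1 where head: "approx_error_bound d d1 (\<lambda>x. ninf x \<le> B) (\<lambda>_ x. ninf x \<le> B)
    (eval_basic b) (\<lambda>\<alpha>. approx_basic (p \<alpha>) \<alpha> B b) L1 K1"
    using basic_block_error[OF d1(1)] by blast
  obtain L2 K2 where tail: "approx_error_bound d1 d'
    (bounded_chain eval_basic B G) (\<lambda>\<alpha>. bounded_chain (approx_basic (p \<alpha>) \<alpha> B) B G)
    (comp_basic eval_basic G) (\<lambda>\<alpha>. comp_basic (approx_basic (p \<alpha>) \<alpha> B) G) L2 K2"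
    using Cons(1)[OF d1(2)] by blast
  show ?case
    unfolding comp_basic_Cons bounded_chain_Cons using approx_error_bound_comp[OF head tail] by blast
qed

lemma block_error:
  assumes "block_dim blk d = Some d'"
  shows "\<exists>L K. approx_error_bound d d'
    (bounded_block eval_basic B blk) (\<lambda>\<alpha>. bounded_block (approx_basic (p \<alpha>) \<alpha> B) B blk)
    (eval_block eval_basic blk) (\<lambda>\<alpha>. eval_block (approx_basic (p \<alpha>) \<alpha> B) blk) L K"
proof (cases blk)
  case (Basic b)
  then show ?thesis
    using assms basic_block_error by (simp add: eval_block_Basic bounded_block_Basic)
next
  case (Residual G M)
  with assms obtain d1 where d1: "chain_dim G d = Some d1" "length M = d1" "\<forall>r\<in>set M. length r = d"
    "d' = d1"
    by (auto split: option.splits if_splits)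
  with chain_error obtain L K where "approx_error_bound d d'
    (bounded_chain eval_basic B G) (\<lambda>\<alpha>. bounded_chain (approx_basic (p \<alpha>) \<alpha> B) B G)
    (comp_basic eval_basic G) (\<lambda>\<alpha>. comp_basic (approx_basic (p \<alpha>) \<alpha> B) G) L K"
    by blast
  from approx_error_bound_add_matvec[OF this d1(3)] d1 show ?thesis
    unfolding Residual eval_block_Residual bounded_block_Residual
    by (blast intro: approx_error_bound_mono)
qed

lemma model_error:
  "model_dim F d = Some d' \<Longrightarrow> \<exists>L K. approx_error_bound d d'
    (bounded_model eval_basic B F) (\<lambda>\<alpha>. bounded_model (approx_basic (p \<alpha>) \<alpha> B) B F)
    (eval_model eval_basic F) (\<lambda>\<alpha>. eval_model (approx_basic (p \<alpha>) \<alpha> B) F) L K"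
proof (induct F arbitrary: d)
  case Nil
  then show ?case
    using approx_error_bound_id by (auto simp: eval_model_Nil bounded_model_Nil)
next
  case (Cons blk F)
  then obtain d1 where d1: "block_dim blk d = Some d1" "model_dim F d1 = Some d'"
    by (auto split: option.splits)
  obtain L1 K1 where head: "approx_error_bound d d1
    (bounded_block eval_basic B blk) (\<lambda>\<alpha>. bounded_block (approx_basic (p \<alpha>) \<alpha> B) B blk)
    (eval_block eval_basic blk) (\<lambda>\<alpha>. eval_block (approx_basic (p \<alpha>) \<alpha> B) blk) L1 K1"
    using block_error[OF d1(1)] by blast
  obtain L2 K2 where tail: "approx_error_bound d1 d'
    (bounded_model eval_basic B F) (\<lambda>\<alpha>. bounded_model (approx_basic (p \<alpha>) \<alpha> B) B F)
    (eval_model eval_basic F) (\<lambda>\<alpha>. eval_model (approx_basic (p \<alpha>) \<alpha> B) F) L2 K2"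
    using Cons(1)[OF d1(2)] by blast
  show ?case
    unfolding eval_model_Cons bounded_model_Cons using approx_error_bound_comp[OF head tail] by blast
qed

end

theorem theorem5:
  fixes p :: "nat \<Rightarrow> real poly" and B :: real and F :: "block list" and d :: nat
  assumes hp: "\<forall>\<alpha>. \<forall>a\<in>{0..1}. \<forall>b\<in>{0..1}. \<bar>malpha (p \<alpha>) a b - max a b\<bar> \<le> 2 powr (- real \<alpha>)"
    and hB: "B > 1"
    and hF: "F \<noteq> []"
    and hwf: "wf_model d F"
  shows "\<exists>C. \<forall>\<alpha>\<ge>4. \<forall>x. length x = d
           \<and> bounded_model eval_basic B F x
           \<and> bounded_model (approx_basic (p \<alpha>) \<alpha> B) B F x
           \<longrightarrow> ninf (vsub (eval_model (approx_basic (p \<alpha>) \<alpha> B) F x) (eval_model eval_basic F x))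
               \<le> C * 2 powr (- real \<alpha>)"
proof -
  have B: "0 < B" using hB by simp
  from hwf obtain d' where d': "model_dim F d = Some d'"
    by (auto simp: wf_model_def)
  obtain L K where "approx_error_bound d d'
    (bounded_model eval_basic B F) (\<lambda>\<alpha>. bounded_model (approx_basic (p \<alpha>) \<alpha> B) B F)
    (eval_model eval_basic F) (\<lambda>\<alpha>. eval_model (approx_basic (p \<alpha>) \<alpha> B) F) L K"
    using model_error[OF hp B d'] by blast
  then show ?thesis
    by (intro exI[of _ K] allI impI) (auto intro: approx_error_bound_at_same_input)
qed

end
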